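(* Let $n\in\mathbb{N}=\{1,2,\dots\}$ and $0\le i\le n-1$. Then $$\int\frac{t^i}{i!}h_n(t)\,dt=-\frac{1}{n!}\sum_{k=0}^i\frac{(n-1-k)!}{2^{k+1}(i-k)!}\,t^{i-k}\,h_{n-1-k}(t),$$ i.e. the right-hand side is an antiderivative on $\mathbb{R}$ of $t\mapsto\frac{t^i}{i!}h_n(t)$.
   Context: $H_n$ denotes the $n$-th Hermite polynomial ($H_n(t)=(-1)^ne^{t^2}\frac{d^n}{dt^n}e^{-t^2}$), and the Hermite functions are $h_n(t)=\frac{1}{2^nn!\sqrt{\pi}}e^{-t^2}H_n(t)$, $t\in\mathbb{R}$. *)

theory Defs
  imports "HOL-Analysis.Analysis"
begin

definition hermite_H :: "nat \<Rightarrow> real \<Rightarrow> real" where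
  "hermite_H n t = (-1) ^ n * exp (t\<^sup>2) * ((deriv ^^ n) (\<lambda>x. exp (- (x\<^sup>2))) t)"

definition hermite_h :: "nat \<Rightarrow> real \<Rightarrow> real" where
  "hermite_h n t = exp (- (t\<^sup>2)) * hermite_H n t / (2 ^ n * fact n * sqrt pi)"

end

theory Submission
  imports Defs "HOL-Computational_Algebra.Polynomial"
begin

text \<open>By the Rodrigues formula \<open>h\<^sub>m\<close> is a constant multiple of the \<open>m\<close>-th derivative of
  \<open>exp (- t\<^sup>2)\<close>, whence the lowering relation \<open>h\<^sub>m' = - 2 (m + 1) h\<^sub>m\<^sub>+\<^sub>1\<close>. With it, the
  product rule turns the derivative of the \<open>k\<close>-th summand into \<open>a\<^sub>k\<^sub>+\<^sub>1 - a\<^sub>k\<close>, where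
  \<open>a\<^sub>k = (n - k)! / (2\<^sup>k (i - k)!) t\<^sup>i\<^sup>-\<^sup>k h\<^sub>n\<^sub>-\<^sub>k(t)\<close> for \<open>k \<le> i\<close> and \<open>a\<^sub>i\<^sub>+\<^sub>1 = 0\<close>; the sum telescopes
  to \<open>- a\<^sub>0 = - n! / i! t\<^sup>i h\<^sub>n(t)\<close>.\<close>

lemma higher_deriv_gaussian_eq_poly:
  "\<exists>p. (deriv ^^ m) (\<lambda>x. exp (- (x\<^sup>2))) = (\<lambda>x. poly p x * exp (- ((x::real)\<^sup>2)))"
proof (induction m)
  case 0
  show ?case by (rule exI[of _ 1]) simp
next
  case (Suc m)
  then obtain p where p: "(deriv ^^ m) (\<lambda>x. exp (- (x\<^sup>2))) = (\<lambda>x. poly p x * exp (- ((x::real)\<^sup>2)))"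
    by blast
  have "((\<lambda>x. poly p x * exp (- (x\<^sup>2))) has_real_derivative
      poly (pderiv p + p * [:0, -2:]) x * exp (- (x\<^sup>2))) (at x)" for x :: real
    by (auto intro!: derivative_eq_intros simp: algebra_simps power2_eq_square)
  then show ?case
    by (intro exI[of _ "pderiv p + p * [:0, -2:]"]) (simp add: p fun_eq_iff DERIV_imp_deriv)
qed

lemma higher_deriv_gaussian_has_real_derivative:
  "((deriv ^^ m) (\<lambda>x. exp (- (x\<^sup>2))) has_real_derivative
     (deriv ^^ Suc m) (\<lambda>x. exp (- (x\<^sup>2))) t) (at (t::real))"
proof -
  obtain p where p: "(deriv ^^ m) (\<lambda>x. exp (- (x\<^sup>2))) = (\<lambda>x. poly p x * exp (- ((x::real)\<^sup>2)))"
    using higher_deriv_gaussian_eq_poly by blast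
  have "((\<lambda>x. poly p x * exp (- (x\<^sup>2))) has_real_derivative
      poly (pderiv p + p * [:0, -2:]) t * exp (- (t\<^sup>2))) (at t)"
    by (auto intro!: derivative_eq_intros simp: algebra_simps power2_eq_square)
  then show ?thesis
    by (simp add: p DERIV_imp_deriv)
qed

lemma hermite_h_Rodrigues:
  "hermite_h m t = (-1) ^ m * (deriv ^^ m) (\<lambda>x. exp (- (x\<^sup>2))) t / (2 ^ m * fact m * sqrt pi)"
  by (simp add: hermite_h_def hermite_H_def exp_minus_inverse mult.assoc
      mult.left_commute[of "exp (- (t\<^sup>2))"])

lemma hermite_h_has_real_derivative:
  "(hermite_h m has_real_derivative - 2 * (real m + 1) * hermite_h (Suc m) t) (at t)"
proof -
  have "(hermite_h m has_real_derivative
      (-1) ^ m * (deriv ^^ Suc m) (\<lambda>x. exp (- (x\<^sup>2))) t / (2 ^ m * fact m * sqrt pi)) (at t)"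
    unfolding hermite_h_Rodrigues[abs_def]
    by (auto intro!: derivative_eq_intros higher_deriv_gaussian_has_real_derivative)
  moreover have "(-1) ^ m * (deriv ^^ Suc m) (\<lambda>x. exp (- (x\<^sup>2))) t / (2 ^ m * fact m * sqrt pi)
      = - 2 * (real m + 1) * hermite_h (Suc m) t"
    by (simp add: hermite_h_Rodrigues[of "Suc m"] divide_simps del: fact_Suc) (simp add: algebra_simps)
  ultimately show ?thesis
    by simp
qed

lemma power_mult_hermite_h_has_real_derivative:
  "((\<lambda>s. s ^ j * hermite_h m s) has_real_derivative
     real j * t ^ (j - 1) * hermite_h m t - 2 * (real m + 1) * t ^ j * hermite_h (Suc m) t) (at t)"
  by (auto intro!: derivative_eq_intros hermite_h_has_real_derivative simp: algebra_simps)

definition hermite_telescope_term :: "nat \<Rightarrow> nat \<Rightarrow> nat \<Rightarrow> real \<Rightarrow> real" where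
  "hermite_telescope_term n i k t =
    (if k \<le> i then fact (n - k) / (2 ^ k * fact (i - k)) * t ^ (i - k) * hermite_h (n - k) t else 0)"

lemma hermite_summand_has_real_derivative:
  assumes "k \<le> i" and "i < n"
  shows "((\<lambda>s. fact (n - 1 - k) / (2 ^ (k + 1) * fact (i - k)) * s ^ (i - k) * hermite_h (n - 1 - k) s)
      has_real_derivative hermite_telescope_term n i (Suc k) t - hermite_telescope_term n i k t) (at t)"
proof -
  define m where "m = n - 1 - k"
  define j where "j = i - k"
  define C :: real where "C = fact m / (2 ^ (k + 1) * fact j)"
  have n_minus_k: "n - k = Suc m"
    using assms unfolding m_def by simp
  have lowered: "C * (2 * (real m + 1) * t ^ j * hermite_h (Suc m) t) = hermite_telescope_term n i k t"
    using assms by (simp add: hermite_telescope_term_def C_def j_def n_minus_k field_simps)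
  have raised: "C * (real j * t ^ (j - 1) * hermite_h m t) = hermite_telescope_term n i (Suc k) t"
  proof (cases j)
    case 0
    then show ?thesis
      using assms by (simp add: hermite_telescope_term_def j_def)
  next
    case (Suc j')
    then have "Suc k \<le> i" "i - Suc k = j'" "n - Suc k = m"
      using assms by (auto simp: j_def m_def)
    with Suc show ?thesis
      by (simp add: hermite_telescope_term_def C_def divide_simps del: fact_Suc) (simp add: algebra_simps)
  qed
  have "((\<lambda>s. C * (s ^ j * hermite_h m s)) has_real_derivative
      C * (real j * t ^ (j - 1) * hermite_h m t - 2 * (real m + 1) * t ^ j * hermite_h (Suc m) t)) (at t)"
    by (intro DERIV_cmult power_mult_hermite_h_has_real_derivative)
  then show ?thesis
    unfolding right_diff_distrib raised lowered by (simp add: C_def m_def j_def mult.assoc)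
qed

theorem lemma3p2:
  fixes n i :: nat
  assumes "n \<ge> 1" and "i \<le> n - 1"
  shows "\<forall>t::real.
    ((\<lambda>s. - (1 / fact n) * (\<Sum>k = 0..i.
        fact (n - 1 - k) / (2 ^ (k + 1) * fact (i - k)) * s ^ (i - k) * hermite_h (n - 1 - k) s))
     has_real_derivative (t ^ i / fact i * hermite_h n t)) (at t)"
proof
  fix t :: real
  let ?a = "\<lambda>k. hermite_telescope_term n i k t"
  let ?f = "\<lambda>s. \<Sum>k = 0..i. fact (n - 1 - k) / (2 ^ (k + 1) * fact (i - k)) * s ^ (i - k) * hermite_h (n - 1 - k) s"
  have "i < n"
    using assms by simp
  then have "(?f has_real_derivative (\<Sum>k = 0..i. ?a (Suc k) - ?a k)) (at t)"
    by (intro DERIV_sum hermite_summand_has_real_derivative) auto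
  also have "(\<Sum>k = 0..i. ?a (Suc k) - ?a k) = ?a (Suc i) - ?a 0"
    by (rule sum_Suc_diff) simp
  also have "\<dots> = - (fact n / fact i * t ^ i * hermite_h n t)"
    by (simp add: hermite_telescope_term_def)
  finally show "((\<lambda>s. - (1 / fact n) * ?f s) has_real_derivative (t ^ i / fact i * hermite_h n t)) (at t)"
    by (auto dest: DERIV_cmult[where c = "- (1 / fact n)"])
qed

end
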